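(* Let $n_0,n_1$ be positive integers, let $(\eta,\omega)$ be a pair of nonnegative integer sequences $(\eta_\ell)_{\ell\ge1},(\omega_\ell)_{\ell\ge1}$ with finite support, and for $\ell\ge1$ let $(y_\ell,z_\ell)$ be the unique real solution of $y_\ell+z_\ell=\sum_{i\ge1}\frac{\eta_{\ell+i}+\omega_{\ell+i}}{(n_0+n_1)^i}$ and $y_\ell-z_\ell=\omega_\ell-\eta_\ell$ if $n_0=n_1$, $y_\ell-z_\ell=\sum_{i\ge1}\frac{\eta_{\ell+i}-\omega_{\ell+i}}{(n_0-n_1)^i}$ if $n_0\ne n_1$. Set $(y_0,z_0)=(1,0)$. Then the equations $\eta_1=n_0y_0+n_1z_0-y_1$ and $\omega_1=n_1y_0+n_0z_0-z_1$ hold if and only if $\sum_{\ell\ge1}\frac{\eta_\ell+\omega_\ell}{(n_0+n_1)^\ell}=1$ and (when $n_0\ne n_1$) $\sum_{\ell\ge1}\frac{\eta_\ell-\omega_\ell}{(n_0-n_1)^\ell}=1$. *)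

theory Defs
  imports Complex_Main
begin

end

theory Submission
  imports Defs
begin

text \<open>Peeling off the first term of the series \<open>\<Sum>\<^sub>\<ell> f\<^sub>\<ell> / c\<^sup>\<ell>\<close> gives
  \<open>(f\<^sub>1 + \<Sum>\<^sub>i f\<^bsub>1+i\<^esub> / c\<^sup>i) / c\<close>; for \<open>\<ell> = 1\<close> the inner sums are exactly the defining
  series of \<open>y\<^sub>1 + z\<^sub>1\<close> and \<open>y\<^sub>1 - z\<^sub>1\<close>. So the two conditions say
  \<open>\<eta>\<^sub>1 + \<omega>\<^sub>1 + y\<^sub>1 + z\<^sub>1 = n\<^sub>0 + n\<^sub>1\<close> and \<open>\<eta>\<^sub>1 - \<omega>\<^sub>1 + y\<^sub>1 - z\<^sub>1 = n\<^sub>0 - n\<^sub>1\<close>, the sum and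
  difference of the two equations for \<open>\<eta>\<^sub>1, \<omega>\<^sub>1\<close>. When \<open>n\<^sub>0 = n\<^sub>1\<close> the difference
  holds by the definition of \<open>y\<^sub>1 - z\<^sub>1\<close>.\<close>

lemma suminf_divide_power_split_first:
  fixes f :: "nat \<Rightarrow> real"
  assumes "c \<noteq> 0" and "finite {l. f l \<noteq> 0}"
  shows "(\<Sum>l. f (l+1) / c^(l+1)) = (f 1 + (\<Sum>i. f (1 + (i+1)) / c^(i+1))) / c"
proof -
  have "finite ((\<lambda>i. 1 + (i+1)) -` {l. f l \<noteq> 0})"
    using assms(2) by (rule finite_vimageI) (simp add: inj_on_def)
  then have summable: "summable (\<lambda>i. f (1 + (i+1)) / c^(i+1))"
    by (intro summable_finite) auto
  have tail: "(\<lambda>l. f (Suc l + 1) / c^(Suc l + 1)) = (\<lambda>i. f (1 + (i+1)) / c^(i+1) / c)"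
    using assms(1) by (auto simp: field_simps)
  have "summable (\<lambda>l. f (Suc l + 1) / c^(Suc l + 1))"
    unfolding tail using summable by (rule summable_divide)
  then have "summable (\<lambda>l. f (l+1) / c^(l+1))"
    by (rule summable_Suc_iff[THEN iffD1])
  then have "(\<Sum>l. f (l+1) / c^(l+1)) = f 1 / c + (\<Sum>l. f (Suc l + 1) / c^(Suc l + 1))"
    using suminf_split_head[of "\<lambda>l. f (l+1) / c^(l+1)"] by simp
  also have "\<dots> = f 1 / c + (\<Sum>i. f (1 + (i+1)) / c^(i+1)) / c"
    unfolding tail using suminf_divide[OF summable] by simp
  finally show ?thesis by (simp add: add_divide_distrib)
qed

theorem corollary1:
  fixes n0 n1 :: nat and eta omega :: "nat \<Rightarrow> nat" and y z :: "nat \<Rightarrow> real"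
  assumes "n0 > 0" and "n1 > 0"
    and "finite {l. eta l \<noteq> 0}" and "finite {l. omega l \<noteq> 0}"
    and sum_eq: "\<And>l. l \<ge> 1 \<Longrightarrow> y l + z l =
        (\<Sum>i. real (eta (l + (i+1)) + omega (l + (i+1))) / (real n0 + real n1) ^ (i+1))"
    and diff_eq_same: "n0 = n1 \<Longrightarrow> (\<And>l. l \<ge> 1 \<Longrightarrow> y l - z l = real (omega l) - real (eta l))"
    and diff_eq_diff: "n0 \<noteq> n1 \<Longrightarrow> (\<And>l. l \<ge> 1 \<Longrightarrow> y l - z l =
        (\<Sum>i. (real (eta (l + (i+1))) - real (omega (l + (i+1)))) / (real n0 - real n1) ^ (i+1)))"
    and "y 0 = 1" and "z 0 = 0"
  shows "(real (eta 1) = real n0 * y 0 + real n1 * z 0 - y 1 \<and>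
          real (omega 1) = real n1 * y 0 + real n0 * z 0 - z 1)
     \<longleftrightarrow>
         ((\<Sum>l. real (eta (l+1) + omega (l+1)) / (real n0 + real n1) ^ (l+1)) = 1 \<and>
          (n0 \<noteq> n1 \<longrightarrow>
            (\<Sum>l. (real (eta (l+1)) - real (omega (l+1))) / (real n0 - real n1) ^ (l+1)) = 1))"
proof -
  have support: "finite {l. f (eta l) (omega l) \<noteq> 0}" if "f 0 0 = 0" for f :: "nat \<Rightarrow> nat \<Rightarrow> real"
    by (rule finite_subset[OF _ finite_UnI[OF assms(3,4)]], rule subsetI, rule ccontr) (use that in auto)
  have "(\<Sum>l. real (eta (l+1) + omega (l+1)) / (real n0 + real n1) ^ (l+1))
      = (real (eta 1) + real (omega 1) + y 1 + z 1) / (real n0 + real n1)"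
    using suminf_divide_power_split_first[of "real n0 + real n1" "\<lambda>l. real (eta l + omega l)"]
      support[of "\<lambda>i j. real (i + j)"] sum_eq[of 1] assms(1)
    by simp
  then have plus_iff: "(\<Sum>l. real (eta (l+1) + omega (l+1)) / (real n0 + real n1) ^ (l+1)) = 1
      \<longleftrightarrow> real (eta 1) + real (omega 1) + y 1 + z 1 = real n0 + real n1"
    using assms(1) by auto
  show ?thesis
  proof (cases "n0 = n1")
    case True
    then show ?thesis using plus_iff diff_eq_same[OF True, of 1] assms(8,9) by auto
  next
    case False
    then have "(\<Sum>l. (real (eta (l+1)) - real (omega (l+1))) / (real n0 - real n1) ^ (l+1))
        = (real (eta 1) - real (omega 1) + (y 1 - z 1)) / (real n0 - real n1)"
      using suminf_divide_power_split_first[of "real n0 - real n1" "\<lambda>l. real (eta l) - real (omega l)"]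
        support[of "\<lambda>i j. real i - real j"] diff_eq_diff[OF False, of 1]
      by simp
    then have "(\<Sum>l. (real (eta (l+1)) - real (omega (l+1))) / (real n0 - real n1) ^ (l+1)) = 1
        \<longleftrightarrow> real (eta 1) - real (omega 1) + y 1 - z 1 = real n0 - real n1"
      using False by auto
    then show ?thesis using plus_iff False assms(8,9) by auto
  qed
qed

end
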